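(* There exists a history-deterministic generalised coBüchi automaton $\mathcal{A}$ over an alphabet $\Sigma$ such that every history-deterministic generalised Büchi automaton recognising $\Sigma^\omega\setminus\mathcal{L}(\mathcal{A})$ has strictly more states than $\mathcal{A}$.
   Context: An automaton is a tuple $(Q,\Sigma,q_{\mathrm{init}},\Delta,\Gamma,\mathrm{col},W)$ with finite state set $Q$, finite input alphabet $\Sigma$, initial state, transitions $\Delta\subseteq Q\times\Sigma\times Q$, output alphabet $\Gamma$, labelling $\mathrm{col}:\Delta\to\Gamma$, acceptance condition $W\subseteq\Gamma^\omega$. A run on $w=a_1a_2\cdots$ is a sequence $(q_0,a_1,q_1)(q_1,a_2,q_2)\cdots$ of transitions with $q_0=q_{\mathrm{init}}$, accepting if its label sequence is in $W$; $\mathcal{L}(\mathcal{A})$ is the set of words having an accepting run. With a finite set $C$ of output colours and $\Gamma=2^C$: generalised Büchi means $W=\{x : \text{every } c\in C \text{ occurs in infinitely many letters of } x\}$; generalised coBüchi means $W=\{x : \text{some } c\in C \text{ occurs in only finitely many letters of } x\}$. A resolver is a map $\sigma:\Sigma^+\to\Delta$ such that for every $w=a_0a_1\cdots$, $\sigma(a_0)\sigma(a_0a_1)\cdots$ is a run on $w$, accepting whenever $w\in\mathcal{L}(\mathcal{A})$; an automaton is history-deterministic if it has a resolver. The number of states is $|Q|$. *)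

theory Defs
  imports Main
begin

(* The acceptance condition W is determined by the colour set C together with
   the kind of condition (generalised Buchi / generalised coBuchi), see below. *)
record ('q, 'a, 'c) automaton =
  states  :: "'q set"
  alphabet :: "'a set"
  initial :: "'q"
  trans   :: "('q \<times> 'a \<times> 'q) set"
  colours :: "'c set"
  col     :: "('q \<times> 'a \<times> 'q) \<Rightarrow> 'c set"

definition wf_automaton :: "('q, 'a, 'c) automaton \<Rightarrow> bool" where
  "wf_automaton A \<longleftrightarrow>
     finite (states A) \<and> finite (alphabet A) \<and> finite (colours A) \<and>
     initial A \<in> states A \<and>
     trans A \<subseteq> states A \<times> alphabet A \<times> states A \<and>
     (\<forall>t \<in> trans A. col A t \<subseteq> colours A)"

definition omega_words :: "'a set \<Rightarrow> (nat \<Rightarrow> 'a) set" where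
  "omega_words S = {w. \<forall>i. w i \<in> S}"

definition is_run :: "('q, 'a, 'c) automaton \<Rightarrow> (nat \<Rightarrow> 'a) \<Rightarrow> (nat \<Rightarrow> 'q \<times> 'a \<times> 'q) \<Rightarrow> bool" where
  "is_run A w r \<longleftrightarrow>
     (\<forall>i. r i \<in> trans A) \<and>
     fst (r 0) = initial A \<and>
     (\<forall>i. fst (snd (r i)) = w i) \<and>
     (\<forall>i. snd (snd (r i)) = fst (r (Suc i)))"

definition gen_buchi_acc :: "'c set \<Rightarrow> (nat \<Rightarrow> 'c set) \<Rightarrow> bool" where
  "gen_buchi_acc C x \<longleftrightarrow> (\<forall>c \<in> C. \<exists>\<^sub>\<infinity>i. c \<in> x i)"

definition gen_cobuchi_acc :: "'c set \<Rightarrow> (nat \<Rightarrow> 'c set) \<Rightarrow> bool" where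
  "gen_cobuchi_acc C x \<longleftrightarrow> (\<exists>c \<in> C. finite {i. c \<in> x i})"

definition accepting_run :: "('c set \<Rightarrow> (nat \<Rightarrow> 'c set) \<Rightarrow> bool) \<Rightarrow> ('q, 'a, 'c) automaton
     \<Rightarrow> (nat \<Rightarrow> 'q \<times> 'a \<times> 'q) \<Rightarrow> bool" where
  "accepting_run W A r \<longleftrightarrow> W (colours A) (\<lambda>i. col A (r i))"

definition lang :: "('c set \<Rightarrow> (nat \<Rightarrow> 'c set) \<Rightarrow> bool) \<Rightarrow> ('q, 'a, 'c) automaton \<Rightarrow> (nat \<Rightarrow> 'a) set" where
  "lang W A = {w \<in> omega_words (alphabet A). \<exists>r. is_run A w r \<and> accepting_run W A r}"

(* resolver sigma : Sigma^+ -> Delta, finite nonempty words as lists;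
   the i-th transition is sigma applied to the prefix a_0 ... a_i *)
definition is_resolver :: "('c set \<Rightarrow> (nat \<Rightarrow> 'c set) \<Rightarrow> bool) \<Rightarrow> ('q, 'a, 'c) automaton
     \<Rightarrow> ('a list \<Rightarrow> 'q \<times> 'a \<times> 'q) \<Rightarrow> bool" where
  "is_resolver W A \<sigma> \<longleftrightarrow>
     (\<forall>w \<in> omega_words (alphabet A).
        let r = (\<lambda>i. \<sigma> (map w [0..<Suc i])) in
        is_run A w r \<and> (w \<in> lang W A \<longrightarrow> accepting_run W A r))"

definition history_deterministic :: "('c set \<Rightarrow> (nat \<Rightarrow> 'c set) \<Rightarrow> bool) \<Rightarrow> ('q, 'a, 'c) automaton \<Rightarrow> bool" where
  "history_deterministic W A \<longleftrightarrow> (\<exists>\<sigma>. is_resolver W A \<sigma>)"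

end

theory Submission
  imports Defs "HOL-Library.Omega_Words_Fun"
begin

(*
  The two-state automaton autA guesses which of the factors 01 and 10 occurs only finitely
  often, with one colour per guess.  A resolver switches its guess whenever it reads the
  factor it is betting against; on a word with finitely many such factors it switches only
  finitely often, so autA is history-deterministic.

  Its complement consists of the words with infinitely many factors 01 and 10.  Let B be a
  history-deterministic generalised Buchi automaton for it, and follow the resolver's
  accepting run on a word u (a (1 - a))^omega.  If every state the resolver can reach after
  u has a detour x -2-> z -l-> x with l <> a, then splicing a detour into the run after
  every a keeps it accepting, since all old transitions still occur infinitely often, but
  the new word has no factor a (1 - a) after u.  A short case analysis shows that suitable
  u and a exist whenever B has at most two states, so B needs at least three.
*)

definition inf_factor :: "'a \<Rightarrow> 'a \<Rightarrow> 'a word \<Rightarrow> bool" where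
  "inf_factor a b w \<longleftrightarrow> (\<exists>\<^sub>\<infinity>i. w i = a \<and> w (Suc i) = b)"

definition alternating_words :: "nat word set" where
  "alternating_words = {w \<in> omega_words {0, 1, 2}. inf_factor 0 1 w \<and> inf_factor 1 0 w}"

lemma run_nth:
  assumes "is_run A w r"
  shows "r i = (fst (r i), w i, fst (r (Suc i)))"
  using assms unfolding is_run_def by (metis prod.collapse)

lemma MOST_or_MOST_not:
  assumes "\<And>i. N \<le> i \<Longrightarrow> P i \<Longrightarrow> P (Suc i)"
  shows "(\<forall>\<^sub>\<infinity>i. P i) \<or> (\<forall>\<^sub>\<infinity>i. \<not> P i)"
proof (cases "\<exists>i\<ge>N. P i")
  case True
  then obtain i where "N \<le> i" "P i" by blast
  then have "P (i + k)" for k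
    by (induction k) (simp_all add: assms)
  then have "\<forall>j\<ge>i. P j"
    by (metis le_add_diff_inverse)
  then show ?thesis
    unfolding MOST_nat_le by blast
next
  case False
  then show ?thesis
    unfolding MOST_nat_le by blast
qed

lemma iter_pair_nth: "[a, b]\<^sup>\<omega> i = (if even i then a else b)"
  by (simp add: numeral_2_eq_2[symmetric] even_iff_mod_2_eq_zero odd_iff_mod_2_eq_one)

lemma iter_pair_in_omega_words: "a \<in> S \<Longrightarrow> b \<in> S \<Longrightarrow> [a, b]\<^sup>\<omega> \<in> omega_words S"
  by (simp add: omega_words_def iter_pair_nth)

lemma conc_in_omega_words:
  assumes "set u \<subseteq> S" and "v \<in> omega_words S"
  shows "u \<frown> v \<in> omega_words S"
  using assms nth_mem unfolding omega_words_def conc_def by fastforce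

lemma inf_factor_conc_iter:
  "inf_factor a b (u \<frown> [a, b]\<^sup>\<omega>) \<and> inf_factor b a (u \<frown> [a, b]\<^sup>\<omega>)"
  unfolding inf_factor_def INFM_nat_le
proof (intro conjI allI)
  fix m
  show "\<exists>i\<ge>m. (u \<frown> [a, b]\<^sup>\<omega>) i = a \<and> (u \<frown> [a, b]\<^sup>\<omega>) (Suc i) = b"
    by (rule exI[of _ "length u + 2 * m"]) (simp add: iter_pair_nth)
  show "\<exists>i\<ge>m. (u \<frown> [a, b]\<^sup>\<omega>) i = b \<and> (u \<frown> [a, b]\<^sup>\<omega>) (Suc i) = a"
    by (rule exI[of _ "length u + 2 * m + 1"]) (simp add: iter_pair_nth)
qed

lemma inf_factor_conc_suffix:
  assumes "inf_factor a b (u \<frown> v)"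
  shows "inf_factor a b v"
  unfolding inf_factor_def INFM_nat_le
proof
  fix m
  obtain i where "m + length u \<le> i" "(u \<frown> v) i = a" "(u \<frown> v) (Suc i) = b"
    using assms unfolding inf_factor_def INFM_nat_le by blast
  then have "m \<le> i - length u" "v (i - length u) = a" "v (Suc (i - length u)) = b"
    by (simp_all add: Suc_diff_le)
  then show "\<exists>j\<ge>m. v j = a \<and> v (Suc j) = b"
    by blast
qed

lemma alternating_conc_iter:
  assumes "set u \<subseteq> {0, 1, 2}" and a: "a \<in> {0, 1}"
  shows "u \<frown> [a, 1 - a]\<^sup>\<omega> \<in> alternating_words"
proof -
  have "u \<frown> [a, 1 - a]\<^sup>\<omega> \<in> omega_words {0, 1, 2}"
    using a by (intro conc_in_omega_words[OF assms(1)] iter_pair_in_omega_words) auto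
  moreover have "inf_factor 0 1 (u \<frown> [a, 1 - a]\<^sup>\<omega>) \<and> inf_factor 1 0 (u \<frown> [a, 1 - a]\<^sup>\<omega>)"
    using a inf_factor_conc_iter[of a "1 - a" u] by auto
  ultimately show ?thesis
    by (simp add: alternating_words_def)
qed

lemma is_run_suffix:
  assumes "is_run A w r"
  shows "is_run (A\<lparr>initial := fst (r n)\<rparr>) (suffix n w) (suffix n r)"
  using assms unfolding is_run_def by simp

lemma is_run_conc:
  assumes run: "is_run A w r" and tail: "is_run (A\<lparr>initial := fst (r n)\<rparr>) v r'"
  shows "is_run A (prefix n w \<frown> v) (prefix n r \<frown> r')"
  unfolding is_run_def
proof (intro conjI allI)
  fix i
  show "(prefix n r \<frown> r') i \<in> trans A" "fst (snd ((prefix n r \<frown> r') i)) = (prefix n w \<frown> v) i"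
    using run tail by (auto simp: is_run_def conc_def subsequence_def)
  show "snd (snd ((prefix n r \<frown> r') i)) = fst ((prefix n r \<frown> r') (Suc i))"
  proof (cases "Suc i < n")
    case True
    then show ?thesis
      using run by (simp add: is_run_def conc_def subsequence_def)
  next
    case False
    then consider "Suc i = n" | "n \<le> i"
      by linarith
    then show ?thesis
    proof cases
      case 1
      then show ?thesis
        using run tail by (auto simp: is_run_def conc_def subsequence_def)
    next
      case 2
      then show ?thesis
        using tail by (simp add: is_run_def conc_def subsequence_def Suc_diff_le)
    qed
  qed
  show "fst ((prefix n r \<frown> r') 0) = initial A"
    using run tail by (cases "n = 0") (simp_all add: is_run_def subsequence_def)
qed

lemma accepting_run_gen_buchi_reoccur:
  assumes acc: "accepting_run gen_buchi_acc A r"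
    and reoccur: "\<And>i. n \<le> i \<Longrightarrow> \<exists>j\<ge>i. r' j = r i"
  shows "accepting_run gen_buchi_acc A r'"
  unfolding accepting_run_def gen_buchi_acc_def INFM_nat_le
proof (intro ballI allI)
  fix c m
  assume "c \<in> colours A"
  then obtain i where "max n m \<le> i" "c \<in> col A (r i)"
    using acc unfolding accepting_run_def gen_buchi_acc_def INFM_nat_le by blast
  moreover from this obtain j where "i \<le> j" "r' j = r i"
    using reoccur by force
  ultimately have "m \<le> j" "c \<in> col A (r' j)"
    by simp_all
  then show "\<exists>j\<ge>m. c \<in> col A (r' j)"
    by blast
qed

text \<open>The concatenation \<open>f 0 @ f 1 @ \<dots>\<close>, provided every \<open>f k\<close> has length 4.\<close>
definition blocks :: "(nat \<Rightarrow> 'a list) \<Rightarrow> 'a word" where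
  "blocks f i = f (i div 4) ! (i mod 4)"

lemma blocks_nth:
  assumes "m < 4"
  shows "blocks f (4 * k + m) = f k ! m"
  using assms by (simp add: blocks_def)

lemma cases_mod_4:
  obtains k m where "(i::nat) = 4 * k + m" "m < 4"
  using that[of "i div 4" "i mod 4"] by simp

lemma blocks_in_omega_words:
  assumes "\<And>k. length (f k) = 4 \<and> set (f k) \<subseteq> S"
  shows "blocks f \<in> omega_words S"
  unfolding omega_words_def blocks_def
proof (intro CollectI allI)
  fix i
  have "i mod 4 < length (f (i div 4))"
    using assms by simp
  then show "f (i div 4) ! (i mod 4) \<in> S"
    using assms nth_mem by blast
qed

lemma blocks_Suc:
  assumes "m < 4"
  shows "blocks f (Suc (4 * k + m)) = (if m = 3 then f (Suc k) ! 0 else f k ! Suc m)"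
proof (cases "m = 3")
  case True
  then have "Suc (4 * k + m) = 4 * Suc k + 0"
    by simp
  then show ?thesis
    using True by (simp only: blocks_nth) simp
next
  case False
  then have "Suc (4 * k + m) = 4 * k + Suc m" and "Suc m < 4"
    using assms by simp_all
  then show ?thesis
    using False by (simp only: blocks_nth) simp
qed

definition detour_word :: "nat \<Rightarrow> nat \<Rightarrow> (nat \<Rightarrow> nat) \<Rightarrow> nat word" where
  "detour_word a b l = blocks (\<lambda>k. [a, 2, l k, b])"

definition detour_run ::
    "(nat \<Rightarrow> 'q \<times> nat \<times> 'q) \<Rightarrow> (nat \<Rightarrow> 'q) \<Rightarrow> (nat \<Rightarrow> nat) \<Rightarrow> nat \<Rightarrow> 'q \<times> nat \<times> 'q" where
  "detour_run r z l = blocks (\<lambda>k. let x = fst (r (2 * k + 1)) in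
     [r (2 * k), (x, 2, z k), (z k, l k, x), r (2 * k + 1)])"

lemma detour_run_is_run:
  assumes run: "is_run A ([a, b]\<^sup>\<omega>) r"
    and detour: "\<And>k. (fst (r (2 * k + 1)), 2, z k) \<in> trans A \<and>
                     (z k, l k, fst (r (2 * k + 1))) \<in> trans A"
  shows "is_run A (detour_word a b l) (detour_run r z l)"
proof -
  have r: "r i \<in> trans A" "fst (snd (r i)) = (if even i then a else b)"
    "snd (snd (r i)) = fst (r (Suc i))" "fst (r 0) = initial A" for i
    using run by (simp_all add: is_run_def iter_pair_nth)
  have "detour_run r z l i \<in> trans A \<and> fst (snd (detour_run r z l i)) = detour_word a b l i \<and>
      snd (snd (detour_run r z l i)) = fst (detour_run r z l (Suc i))" for i
  proof -
    obtain k m where i: "i = 4 * k + m" and m: "m < 4"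
      by (rule cases_mod_4)
    then consider "m = 0" | "m = 1" | "m = 2" | "m = 3"
      by linarith
    then show ?thesis
      unfolding i detour_run_def detour_word_def blocks_nth[OF m] blocks_Suc[OF m]
      by cases (use detour[of k] in \<open>simp_all add: r Let_def\<close>)
  qed
  moreover have "detour_run r z l 0 = r 0"
    by (simp add: detour_run_def blocks_def Let_def)
  ultimately show ?thesis
    unfolding is_run_def using r(4) by simp
qed

lemma detour_run_reoccur: "\<exists>j\<ge>i. detour_run r z l j = r i"
proof (cases "even i")
  case True
  then obtain k where "i = 2 * k"
    by blast
  then show ?thesis
    by (intro exI[of _ "4 * k"]) (simp add: detour_run_def blocks_def Let_def)
next
  case False
  then obtain k where "i = 2 * k + 1"
    using oddE by blast
  then show ?thesis
    by (intro exI[of _ "4 * k + 3"]) (simp add: detour_run_def blocks_def Let_def)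
qed

lemma not_inf_factor_detour_word:
  assumes "a \<noteq> b" "a \<noteq> 2" "b \<noteq> 2" "\<And>k. l k \<noteq> a"
  shows "\<not> inf_factor a b (detour_word a b l)"
proof -
  have "\<not> (detour_word a b l i = a \<and> detour_word a b l (Suc i) = b)" for i
  proof -
    obtain k m where i: "i = 4 * k + m" and m: "m < 4"
      by (rule cases_mod_4)
    then consider "m = 0" | "m = 1" | "m = 2" | "m = 3"
      by linarith
    then show ?thesis
      unfolding i detour_word_def blocks_nth[OF m] blocks_Suc[OF m]
      by cases (simp_all add: assms)
  qed
  then show ?thesis
    unfolding inf_factor_def by (auto elim: INFM_E)
qed

lemma splice_detours:
  assumes run: "is_run A w r" and acc: "accepting_run gen_buchi_acc A r"
    and tail: "suffix n w = [a, b]\<^sup>\<omega>"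
    and detour: "\<And>k. (fst (r (n + (2 * k + 1))), 2, z k) \<in> trans A \<and>
                     (z k, l k, fst (r (n + (2 * k + 1)))) \<in> trans A"
  shows "is_run A (prefix n w \<frown> detour_word a b l) (prefix n r \<frown> detour_run (suffix n r) z l)"
    and "accepting_run gen_buchi_acc A (prefix n r \<frown> detour_run (suffix n r) z l)"
proof -
  have "is_run (A\<lparr>initial := fst (r n)\<rparr>) ([a, b]\<^sup>\<omega>) (suffix n r)"
    using is_run_suffix[OF run, of n] tail by simp
  then have "is_run (A\<lparr>initial := fst (r n)\<rparr>) (detour_word a b l) (detour_run (suffix n r) z l)"
    by (rule detour_run_is_run) (use detour in simp)
  then show "is_run A (prefix n w \<frown> detour_word a b l) (prefix n r \<frown> detour_run (suffix n r) z l)"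
    by (rule is_run_conc[OF run])
  show "accepting_run gen_buchi_acc A (prefix n r \<frown> detour_run (suffix n r) z l)"
  proof (rule accepting_run_gen_buchi_reoccur[OF acc])
    fix i
    assume "n \<le> i"
    obtain j where "i - n \<le> j" "detour_run (suffix n r) z l j = suffix n r (i - n)"
      using detour_run_reoccur by blast
    then have "i \<le> n + j" "(prefix n r \<frown> detour_run (suffix n r) z l) (n + j) = r i"
      using \<open>n \<le> i\<close> by simp_all
    then show "\<exists>j\<ge>i. (prefix n r \<frown> detour_run (suffix n r) z l) j = r i"
      by blast
  qed
qed

text \<open>
  For \<open>a \<in> {0, 1}\<close>, state 0 of the automaton below records that the last letter read was \<open>a\<close>.
  A transition avoids colour \<open>a\<close> when it keeps this record correct and does not
  read a factor \<open>a (1 - a)\<close>; so a run avoiding colour \<open>a\<close> from some point on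
  witnesses that the factor \<open>a (1 - a)\<close> occurs only finitely often.
\<close>
definition safe_for :: "nat \<Rightarrow> nat \<times> nat \<times> nat \<Rightarrow> bool" where
  "safe_for a = (\<lambda>(s, x, s'). s' = (if x = a then 0 else 1) \<and> \<not> (s = 0 \<and> x = 1 - a))"

definition autA :: "(nat, nat, nat) automaton" where
  "autA = \<lparr>states = {0, 1}, alphabet = {0, 1, 2}, initial = 1,
           trans = {0, 1} \<times> {0, 1, 2} \<times> {0, 1}, colours = {0, 1},
           col = (\<lambda>t. {a \<in> {0, 1}. \<not> safe_for a t})\<rparr>"

lemma wf_autA: "wf_automaton autA"
  by (auto simp: wf_automaton_def autA_def)

lemma not_safe_for_factor:
  assumes "safe_for a (s, a, s')" and "safe_for a (s', 1 - a, s'')"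
  shows False
  using assms by (simp add: safe_for_def)

lemma accepting_autA_iff:
  "accepting_run gen_cobuchi_acc autA r \<longleftrightarrow> (\<exists>a\<in>{0, 1}. \<forall>\<^sub>\<infinity>i. safe_for a (r i))"
  by (simp add: accepting_run_def gen_cobuchi_acc_def autA_def MOST_iff_cofinite)

lemma not_accepting_autA:
  assumes "is_run autA w r" and "inf_factor 0 1 w" and "inf_factor 1 0 w"
  shows "\<not> accepting_run gen_cobuchi_acc autA r"
proof
  assume "accepting_run gen_cobuchi_acc autA r"
  then obtain a where a: "a \<in> {0, 1}" and safe: "\<forall>\<^sub>\<infinity>i. safe_for a (r i)"
    unfolding accepting_autA_iff by blast
  have "inf_factor a (1 - a) w"
    using a assms(2,3) by auto
  moreover have "\<forall>\<^sub>\<infinity>i. safe_for a (r i) \<and> safe_for a (r (Suc i))"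
    using MOST_conjI[OF safe MOST_SucI[OF safe]] .
  ultimately have "\<exists>\<^sub>\<infinity>i. (w i = a \<and> w (Suc i) = 1 - a) \<and> safe_for a (r i) \<and> safe_for a (r (Suc i))"
    unfolding inf_factor_def by (rule INFM_conjI)
  then obtain i where "w i = a" "w (Suc i) = 1 - a" "safe_for a (r i)" "safe_for a (r (Suc i))"
    by (rule INFM_E) blast
  then show False
    using not_safe_for_factor run_nth[OF assms(1), of i] run_nth[OF assms(1), of "Suc i"]
    by (metis (no_types))
qed

text \<open>
  A resolver configuration is a guess \<open>a\<close> of the colour to avoid, paired with the current
  state of \<open>autA\<close>; the guess flips whenever the factor \<open>a (1 - a)\<close> is read.
\<close>
fun resolver_step :: "nat \<times> nat \<Rightarrow> nat \<Rightarrow> nat \<times> nat" where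
  "resolver_step (a, s) x =
    (let a' = (if s = 0 \<and> x = 1 - a then 1 - a else a) in (a', if x = a' then 0 else 1))"

definition resolver_conf :: "nat list \<Rightarrow> nat \<times> nat" where
  "resolver_conf xs = foldl resolver_step (0, 1) xs"

definition resolver_autA :: "nat list \<Rightarrow> nat \<times> nat \<times> nat" where
  "resolver_autA xs = (snd (resolver_conf (butlast xs)), last xs, snd (resolver_conf xs))"

lemma resolver_conf_snoc: "resolver_conf (xs @ [x]) = resolver_step (resolver_conf xs) x"
  by (simp add: resolver_conf_def)

lemma resolver_autA_snoc:
  "resolver_autA (xs @ [x]) = (snd (resolver_conf xs), x, snd (resolver_step (resolver_conf xs) x))"
  by (simp add: resolver_autA_def resolver_conf_snoc)

lemma fst_resolver_step_le: "fst c \<le> 1 \<Longrightarrow> fst (resolver_step c x) \<le> 1"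
  by (cases c) (simp add: Let_def)

lemma snd_resolver_step: "snd (resolver_step c x) = (if x = fst (resolver_step c x) then 0 else 1)"
  by (cases c) (simp add: Let_def)

lemma resolver_step_switch:
  "fst (resolver_step c x) \<noteq> fst c \<Longrightarrow> snd c = 0 \<and> x = 1 - fst c"
  by (cases c) (auto simp: Let_def split: if_splits)

lemma resolver_step_safe_for:
  "fst c \<le> 1 \<Longrightarrow> safe_for (fst (resolver_step c x)) (snd c, x, snd (resolver_step c x))"
proof -
  obtain a s where c: "c = (a, s)"
    by fastforce
  assume "fst c \<le> 1"
  then have "1 - a \<noteq> a"
    using c by simp arith
  then show ?thesis
    using c by (auto simp: safe_for_def Let_def)
qed

lemma fst_resolver_conf_le: "fst (resolver_conf xs) \<le> 1"
proof (induction xs rule: rev_induct)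
  case (snoc x xs)
  then show ?case
    using fst_resolver_step_le unfolding resolver_conf_snoc by blast
qed (simp add: resolver_conf_def)

lemma snd_resolver_conf: "snd (resolver_conf xs) \<in> {0, 1}"
  by (cases xs rule: rev_cases) (auto simp: resolver_conf_snoc resolver_conf_def snd_resolver_step)

lemma resolver_switch_factor:
  assumes "fst (resolver_conf (prefix (Suc i) w)) \<noteq> fst (resolver_conf (prefix i w))"
  shows "\<exists>j. i = Suc j \<and> w j = fst (resolver_conf (prefix i w)) \<and> w i = 1 - fst (resolver_conf (prefix i w))"
proof -
  have "snd (resolver_conf (prefix i w)) = 0" and wi: "w i = 1 - fst (resolver_conf (prefix i w))"
    using resolver_step_switch assms by (auto simp: resolver_conf_snoc subsequence_def)
  moreover from this obtain j where "i = Suc j"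
    by (cases i) (simp_all add: resolver_conf_def)
  ultimately show ?thesis
    using snd_resolver_step by (auto simp: resolver_conf_snoc subsequence_def split: if_splits)
qed

lemma resolver_autA_run:
  assumes "w \<in> omega_words {0, 1, 2}"
  shows "is_run autA w (\<lambda>i. resolver_autA (prefix (Suc i) w))"
proof -
  have run_i: "resolver_autA (prefix (Suc i) w) =
      (snd (resolver_conf (prefix i w)), w i, snd (resolver_conf (prefix (Suc i) w)))" for i
    by (simp add: resolver_autA_snoc resolver_conf_snoc)
  have "resolver_autA (prefix (Suc i) w) \<in> trans autA" for i
    using snd_resolver_conf[of "prefix i w"] snd_resolver_conf[of "prefix (Suc i) w"] assms
    unfolding run_i omega_words_def by (simp add: autA_def del: insert_Times_insert)
  then show ?thesis
    unfolding is_run_def run_i by (simp add: autA_def resolver_conf_def)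
qed

lemma resolver_guess_eventually_constant:
  assumes a: "a \<in> {0, 1}" and finite_factors: "\<not> inf_factor a (1 - a) w"
  shows "\<exists>c\<in>{0, 1}. \<forall>\<^sub>\<infinity>i. fst (resolver_conf (prefix i w)) = c"
proof -
  define guess_at where "guess_at i = fst (resolver_conf (prefix i w))" for i
  obtain N where N: "\<And>j. N \<le> j \<Longrightarrow> \<not> (w j = a \<and> w (Suc j) = 1 - a)"
    using finite_factors unfolding inf_factor_def not_INFM MOST_nat_le by blast
  have "guess_at (Suc i) = a" if late: "Suc N \<le> i" and guess_a: "guess_at i = a" for i
  proof (rule ccontr)
    assume "guess_at (Suc i) \<noteq> a"
    then obtain j where "i = Suc j" "w j = a" "w i = 1 - a"
      using resolver_switch_factor[of w i] guess_a unfolding guess_at_def by auto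
    then show False
      using N[of j] late by simp
  qed
  then have "(\<forall>\<^sub>\<infinity>i. guess_at i = a) \<or> (\<forall>\<^sub>\<infinity>i. guess_at i \<noteq> a)"
    by (rule MOST_or_MOST_not)
  moreover have "\<forall>\<^sub>\<infinity>i. guess_at i = 1 - a" if "\<forall>\<^sub>\<infinity>i. guess_at i \<noteq> a"
    using that
  proof (rule MOST_mono)
    show "guess_at i = 1 - a" if "guess_at i \<noteq> a" for i
      using that a fst_resolver_conf_le[of "prefix i w"] unfolding guess_at_def by auto
  qed
  moreover have "1 - a \<in> {0, 1}"
    using a by auto
  ultimately show ?thesis
    using a unfolding guess_at_def by blast
qed

lemma resolver_autA_accepting:
  assumes "w \<notin> alternating_words" and "w \<in> omega_words {0, 1, 2}"
  shows "accepting_run gen_cobuchi_acc autA (\<lambda>i. resolver_autA (prefix (Suc i) w))"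
proof -
  obtain a where "a \<in> {0, 1}" and "\<not> inf_factor a (1 - a) w"
    using assms unfolding alternating_words_def by (metis diff_zero diff_self_eq_0 insertCI mem_Collect_eq)
  then obtain c where c: "c \<in> {0, 1}"
    and eventually_c: "\<forall>\<^sub>\<infinity>i. fst (resolver_conf (prefix i w)) = c"
    using resolver_guess_eventually_constant by blast
  have "\<forall>\<^sub>\<infinity>i. fst (resolver_conf (prefix (Suc i) w)) = c"
    using eventually_c by (rule MOST_SucI)
  then have "\<forall>\<^sub>\<infinity>i. safe_for c (resolver_autA (prefix (Suc i) w))"
  proof (rule MOST_mono)
    show "safe_for c (resolver_autA (prefix (Suc i) w))"
      if "fst (resolver_conf (prefix (Suc i) w)) = c" for i
      using that resolver_step_safe_for[OF fst_resolver_conf_le[of "prefix i w"], of "w i"]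
      by (simp add: resolver_autA_snoc resolver_conf_snoc)
  qed
  then show ?thesis
    using c accepting_autA_iff by blast
qed

lemma alphabet_autA [simp]: "alphabet autA = {0, 1, 2}"
  by (simp add: autA_def)

lemma lang_autA: "lang gen_cobuchi_acc autA = omega_words {0, 1, 2} - alternating_words"
proof (intro set_eqI iffI)
  fix w
  assume "w \<in> lang gen_cobuchi_acc autA"
  then obtain r where "w \<in> omega_words {0, 1, 2}" "is_run autA w r"
    "accepting_run gen_cobuchi_acc autA r"
    unfolding lang_def by auto
  then show "w \<in> omega_words {0, 1, 2} - alternating_words"
    using not_accepting_autA unfolding alternating_words_def by blast
next
  fix w
  assume "w \<in> omega_words {0, 1, 2} - alternating_words"
  then show "w \<in> lang gen_cobuchi_acc autA"
    using resolver_autA_run resolver_autA_accepting unfolding lang_def by auto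
qed

lemma history_deterministic_autA: "history_deterministic gen_cobuchi_acc autA"
  unfolding history_deterministic_def is_resolver_def
proof (intro exI ballI)
  fix w
  assume "w \<in> omega_words (alphabet autA)"
  then show "let r = \<lambda>i. resolver_autA (map w [0..<Suc i])
    in is_run autA w r \<and> (w \<in> lang gen_cobuchi_acc autA \<longrightarrow> accepting_run gen_cobuchi_acc autA r)"
    using resolver_autA_run resolver_autA_accepting
    unfolding lang_autA subsequence_def Let_def by simp
qed

locale hd_alternating_recogniser =
  fixes B :: "(nat, nat, nat) automaton" and \<sigma> :: "nat list \<Rightarrow> nat \<times> nat \<times> nat"
  assumes wf_B: "wf_automaton B"
    and alphabet_B: "alphabet B = {0, 1, 2}"
    and resolver: "is_resolver gen_buchi_acc B \<sigma>"
    and lang_B: "lang gen_buchi_acc B = alternating_words"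
begin

definition resolved_run :: "nat word \<Rightarrow> nat \<Rightarrow> nat \<times> nat \<times> nat" where
  "resolved_run w i = \<sigma> (prefix (Suc i) w)"

definition after :: "nat list \<Rightarrow> nat" where
  "after xs = (if xs = [] then initial B else snd (snd (\<sigma> xs)))"

definition reached :: "nat list \<Rightarrow> nat set" where
  "reached u = {after (u @ v) | v. set v \<subseteq> {0, 1, 2}}"

lemma resolved_run_correct:
  assumes "w \<in> omega_words {0, 1, 2}"
  shows "is_run B w (resolved_run w) \<and>
    (w \<in> alternating_words \<longrightarrow> accepting_run gen_buchi_acc B (resolved_run w))"
proof -
  have "(\<lambda>i. \<sigma> (map w [0..<Suc i])) = resolved_run w"
    unfolding resolved_run_def subsequence_def ..
  moreover have "w \<in> omega_words (alphabet B)"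
    using assms alphabet_B by simp
  ultimately show ?thesis
    using resolver lang_B unfolding is_resolver_def Let_def by metis
qed

lemma resolved_run_is_run: "w \<in> omega_words {0, 1, 2} \<Longrightarrow> is_run B w (resolved_run w)"
  using resolved_run_correct by blast

lemma resolved_run_accepting:
  "w \<in> alternating_words \<Longrightarrow> accepting_run gen_buchi_acc B (resolved_run w)"
  using resolved_run_correct unfolding alternating_words_def by blast

lemma accepting_run_alternating:
  assumes "w \<in> omega_words {0, 1, 2}" "is_run B w r" "accepting_run gen_buchi_acc B r"
  shows "w \<in> alternating_words"
proof -
  have "w \<in> lang gen_buchi_acc B"
    using assms alphabet_B unfolding lang_def by auto
  then show ?thesis
    using lang_B by simp
qed

lemma fst_resolved_run:
  assumes "w \<in> omega_words {0, 1, 2}"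
  shows "fst (resolved_run w i) = after (prefix i w)"
proof (cases i)
  case 0
  then show ?thesis
    using resolved_run_is_run[OF assms] by (simp add: is_run_def after_def)
next
  case (Suc j)
  then show ?thesis
    using resolved_run_is_run[OF assms]
    by (simp add: is_run_def after_def resolved_run_def del: subseq_to_Suc)
qed

lemma after_snoc_trans:
  assumes "set xs \<subseteq> {0, 1, 2}" "x \<in> {0, 1, 2}"
  shows "(after xs, x, after (xs @ [x])) \<in> trans B"
proof -
  define w where "w = (xs @ [x]) \<frown> (\<lambda>_. 0)"
  have w: "w \<in> omega_words {0, 1, 2}"
    using assms unfolding w_def by (intro conc_in_omega_words) (auto simp: omega_words_def)
  have run: "is_run B w (resolved_run w)"
    using w by (rule resolved_run_is_run)
  have "fst (resolved_run w (length xs)) = after xs"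
    using fst_resolved_run[OF w, of "length xs"] by (simp add: w_def)
  moreover have "fst (resolved_run w (Suc (length xs))) = after (xs @ [x])"
    using fst_resolved_run[OF w, of "Suc (length xs)"] prefix_conc_length[of "xs @ [x]"]
    by (simp add: w_def del: subseq_to_Suc)
  moreover have "w (length xs) = x"
    by (simp add: w_def)
  ultimately have "resolved_run w (length xs) = (after xs, x, after (xs @ [x]))"
    using run_nth[OF run, of "length xs"] by simp
  moreover have "resolved_run w (length xs) \<in> trans B"
    using run by (simp add: is_run_def)
  ultimately show ?thesis
    by simp
qed

lemma trans_B_subset:
  assumes "(q, c, q') \<in> trans B"
  shows "q \<in> states B" "c \<in> {0, 1, 2}" "q' \<in> states B"
  using assms wf_B alphabet_B unfolding wf_automaton_def by blast+

lemma after_in_states: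
  assumes "set xs \<subseteq> {0, 1, 2}"
  shows "after xs \<in> states B"
proof (cases xs rule: rev_cases)
  case Nil
  then show ?thesis
    using wf_B by (simp add: after_def wf_automaton_def)
next
  case (snoc ys y)
  then have "(after ys, y, after xs) \<in> trans B"
    using after_snoc_trans[of ys y] assms by simp
  then show ?thesis
    by (rule trans_B_subset)
qed

lemma reached_subset_states: "set u \<subseteq> {0, 1, 2} \<Longrightarrow> reached u \<subseteq> states B"
  unfolding reached_def using after_in_states by auto

lemma after_in_reached: "after u \<in> reached u"
  unfolding reached_def by (rule CollectI, rule exI[of _ "[]"]) simp

lemma reached_step:
  assumes "set u \<subseteq> {0, 1, 2}" "x \<in> reached u" "c \<in> {0, 1, 2}"
  shows "\<exists>y\<in>reached u. (x, c, y) \<in> trans B"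
proof -
  obtain v where v: "set v \<subseteq> {0, 1, 2}" "x = after (u @ v)"
    using assms(2) unfolding reached_def by blast
  then have "(x, c, after (u @ (v @ [c]))) \<in> trans B"
    using after_snoc_trans[of "u @ v" c] assms(1,3) by simp
  moreover have "after (u @ (v @ [c])) \<in> reached u"
    using v(1) assms(3) unfolding reached_def by (intro CollectI exI[of _ "v @ [c]"]) simp
  ultimately show ?thesis
    by blast
qed

lemma reached_sink:
  assumes u: "set u \<subseteq> {0, 1, 2}" and sink: "\<And>c y. (after u, c, y) \<in> trans B \<Longrightarrow> y = after u"
  shows "reached u = {after u}"
proof -
  have "after (u @ v) = after u" if "set v \<subseteq> {0, 1, 2}" for v
    using that
  proof (induction v rule: rev_induct)
    case (snoc c v)
    then show ?case
      using after_snoc_trans[of "u @ v" c] u sink by (simp flip: append_assoc)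
  qed simp
  then have "reached u \<subseteq> {after u}"
    unfolding reached_def by blast
  then show ?thesis
    using after_in_reached by blast
qed

lemma fst_resolved_run_conc_in_reached:
  assumes "set u \<subseteq> {0, 1, 2}" and "v \<in> omega_words {0, 1, 2}"
  shows "fst (resolved_run (u \<frown> v) (length u + i)) \<in> reached u"
proof -
  have "fst (resolved_run (u \<frown> v) (length u + i)) = after (u @ prefix i v)"
    using fst_resolved_run[OF conc_in_omega_words[OF assms]] by simp
  moreover have "set (prefix i v) \<subseteq> {0, 1, 2}"
    unfolding subsequence_def set_map
    by (rule image_subsetI) (use assms(2) in \<open>simp add: omega_words_def\<close>)
  ultimately show ?thesis
    unfolding reached_def by blast
qed

definition has_detour :: "nat \<Rightarrow> nat \<Rightarrow> bool" where
  "has_detour a x \<longleftrightarrow> (\<exists>z l. l \<noteq> a \<and> (x, 2, z) \<in> trans B \<and> (z, l, x) \<in> trans B)"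

lemma detour_word_accepted:
  assumes u: "set u \<subseteq> {0, 1, 2}" and a: "a \<in> {0, 1}"
    and detours: "\<forall>x\<in>reached u. has_detour a x"
  shows "\<exists>l. (\<forall>k. l k \<noteq> a) \<and> u \<frown> detour_word a (1 - a) l \<in> alternating_words"
proof -
  define n where "n = length u"
  define w where "w = u \<frown> [a, 1 - a]\<^sup>\<omega>"
  define \<rho> where "\<rho> = resolved_run w"
  have alternating: "w \<in> alternating_words"
    unfolding w_def using u a by (rule alternating_conc_iter)
  then have w: "w \<in> omega_words {0, 1, 2}"
    by (simp add: alternating_words_def)
  have "fst (\<rho> (n + (2 * k + 1))) \<in> reached u" for k
    unfolding \<rho>_def w_def n_def using u a
    by (intro fst_resolved_run_conc_in_reached iter_pair_in_omega_words) auto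
  then have "\<forall>k. \<exists>zl. snd zl \<noteq> a \<and> (fst (\<rho> (n + (2 * k + 1))), 2, fst zl) \<in> trans B \<and>
      (fst zl, snd zl, fst (\<rho> (n + (2 * k + 1)))) \<in> trans B"
    using detours unfolding has_detour_def by fastforce
  then obtain zl where zl: "\<forall>k. snd (zl k) \<noteq> a \<and> (fst (\<rho> (n + (2 * k + 1))), 2, fst (zl k)) \<in> trans B \<and>
      (fst (zl k), snd (zl k), fst (\<rho> (n + (2 * k + 1)))) \<in> trans B"
    by (rule choice[THEN exE])
  define z where "z k = fst (zl k)" for k
  define l where "l k = snd (zl k)" for k
  have run: "is_run B w \<rho>" and acc: "accepting_run gen_buchi_acc B \<rho>"
    unfolding \<rho>_def using w alternating by (simp_all add: resolved_run_is_run resolved_run_accepting)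
  have tail: "suffix n w = [a, 1 - a]\<^sup>\<omega>" and head: "prefix n w = u"
    by (simp_all add: w_def n_def)
  have "l k \<in> {0, 1, 2}" for k
    using zl trans_B_subset(2) unfolding l_def by blast
  then have "u \<frown> detour_word a (1 - a) l \<in> omega_words {0, 1, 2}"
    using u a unfolding detour_word_def by (intro conc_in_omega_words blocks_in_omega_words) auto
  then have "u \<frown> detour_word a (1 - a) l \<in> alternating_words"
    using splice_detours[OF run acc tail, of z l] zl accepting_run_alternating
    unfolding head z_def l_def by blast
  moreover have "\<forall>k. l k \<noteq> a"
    using zl by (simp add: l_def)
  ultimately show ?thesis
    by (intro exI[of _ l]) simp
qed

lemma not_all_reached_have_detour:
  assumes "set u \<subseteq> {0, 1, 2}" and a: "a \<in> {0, 1}"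
  shows "\<exists>x\<in>reached u. \<not> has_detour a x"
proof (rule ccontr)
  assume "\<not> ?thesis"
  then obtain l where l: "\<forall>k. l k \<noteq> a" and "u \<frown> detour_word a (1 - a) l \<in> alternating_words"
    using detour_word_accepted assms by blast
  then have "inf_factor a (1 - a) (u \<frown> detour_word a (1 - a) l)"
    using a by (auto simp: alternating_words_def)
  then have "inf_factor a (1 - a) (detour_word a (1 - a) l)"
    by (rule inf_factor_conc_suffix)
  moreover have "\<not> inf_factor a (1 - a) (detour_word a (1 - a) l)"
    using a l by (intro not_inf_factor_detour_word) auto
  ultimately show False
    by contradiction
qed

lemma states_if_no_2_cycle:
  assumes card: "card (states B) \<le> 2"
    and q: "q \<in> reached []" and q': "q' \<in> reached []" "(q, 2, q') \<in> trans B"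
    and no_cycle: "\<And>z. (q, 2, z) \<in> trans B \<Longrightarrow> (z, 2, q) \<notin> trans B"
  shows "states B = {q, q'}" and "(q', 2, q') \<in> trans B"
proof -
  have sub: "{q, q'} \<subseteq> states B"
    using q q' reached_subset_states[of "[]"] by auto
  have "q \<noteq> q'"
    using no_cycle q'(2) by blast
  then have "card {q, q'} = 2"
    by simp
  moreover have fin: "finite (states B)"
    using wf_B by (simp add: wf_automaton_def)
  ultimately have "card {q, q'} = card (states B)"
    using card card_mono[OF fin sub] by simp
  then show states: "states B = {q, q'}"
    using card_subset_eq[OF fin sub] by simp
  obtain y where "y \<in> reached []" "(q', 2, y) \<in> trans B"
    using reached_step[of "[]" q' 2] q' by auto
  moreover from this have "y \<noteq> q"
    using no_cycle[OF q'(2)] by blast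
  ultimately show "(q', 2, q') \<in> trans B"
    using reached_subset_states[of "[]"] states by auto
qed

text \<open>
  If some reachable \<open>q\<close> lies on no \<open>2\<close>-cycle, the two states are \<open>q\<close> and its
  \<open>2\<close>-successor \<open>q'\<close>, which carries a \<open>2\<close>-loop; either a letter \<open>c \<in> {0, 1}\<close> leads
  back from \<open>q'\<close> to \<open>q\<close>, or \<open>q'\<close> is a sink.
\<close>
lemma detours_if_card_le_2:
  assumes card: "card (states B) \<le> 2"
  shows "\<exists>u a. set u \<subseteq> {0, 1, 2} \<and> a \<in> {0, 1} \<and> (\<forall>x\<in>reached u. has_detour a x)"
proof (cases "\<forall>x\<in>reached []. \<exists>z. (x, 2, z) \<in> trans B \<and> (z, 2, x) \<in> trans B")
  case True
  have "has_detour 0 x" if x: "x \<in> reached []" for x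
  proof -
    obtain z where "(x, 2, z) \<in> trans B" "(z, 2, x) \<in> trans B"
      using True x by blast
    then show ?thesis
      unfolding has_detour_def by (intro exI[of _ z] exI[of _ 2]) simp
  qed
  then show ?thesis
    by (intro exI[of _ "[]"] exI[of _ 0]) simp
next
  case False
  then obtain q where q: "q \<in> reached []"
    and no_cycle: "\<And>z. (q, 2, z) \<in> trans B \<Longrightarrow> (z, 2, q) \<notin> trans B"
    by blast
  obtain q' where q': "q' \<in> reached []" "(q, 2, q') \<in> trans B"
    using reached_step[of "[]" q 2] q by auto
  note states = states_if_no_2_cycle(1)[OF card q q' no_cycle]
    and loop = states_if_no_2_cycle(2)[OF card q q' no_cycle]
  show ?thesis
  proof (cases "\<exists>c\<in>{0, 1}. (q', c, q) \<in> trans B")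
    case True
    then obtain c where c: "c \<in> {0, 1}" "(q', c, q) \<in> trans B"
      by blast
    have "c \<noteq> 1 - c" "2 \<noteq> 1 - c"
      using c(1) by auto
    then have "has_detour (1 - c) q" "has_detour (1 - c) q'"
      unfolding has_detour_def using c(2) q'(2) loop by blast+
    then have "\<forall>x\<in>reached []. has_detour (1 - c) x"
      using reached_subset_states[of "[]"] states by auto
    then show ?thesis
      using c(1) by (intro exI[of _ "[]"] exI[of _ "1 - c"]) auto
  next
    case False
    obtain u where u: "set u \<subseteq> {0, 1, 2}" "q' = after u"
      using q'(1) unfolding reached_def by auto
    have "y = q'" if y: "(q', c, y) \<in> trans B" for c y
    proof (rule ccontr)
      assume "y \<noteq> q'"
      then have "y = q"
        using trans_B_subset(3)[OF y] states by simp
      then show False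
        using y False no_cycle[OF q'(2)] trans_B_subset(2)[OF y] by auto
    qed
    then have "reached u = {q'}"
      using reached_sink u by blast
    moreover have "has_detour 0 q'"
      unfolding has_detour_def using loop by (intro exI[of _ q'] exI[of _ 2]) simp
    ultimately show ?thesis
      using u(1) by (intro exI[of _ u] exI[of _ 0]) simp
  qed
qed

lemma two_lt_card_states: "2 < card (states B)"
proof (rule ccontr)
  assume "\<not> 2 < card (states B)"
  then obtain u a where "set u \<subseteq> {0, 1, 2}" "a \<in> {0, 1}" "\<forall>x\<in>reached u. has_detour a x"
    using detours_if_card_le_2 by force
  moreover from this obtain x where "x \<in> reached u" "\<not> has_detour a x"
    using not_all_reached_have_detour by blast
  ultimately show False
    by blast
qed

end

theorem lemma6:
  shows "\<exists>(A :: (nat, nat, nat) automaton).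
           wf_automaton A \<and> history_deterministic gen_cobuchi_acc A \<and>
           (\<forall>(B :: (nat, nat, nat) automaton).
              wf_automaton B \<and> alphabet B = alphabet A \<and>
              history_deterministic gen_buchi_acc B \<and>
              lang gen_buchi_acc B = omega_words (alphabet A) - lang gen_cobuchi_acc A
              \<longrightarrow> card (states B) > card (states A))"
proof (intro exI conjI allI impI)
  show "wf_automaton autA" "history_deterministic gen_cobuchi_acc autA"
    by (fact wf_autA history_deterministic_autA)+
  fix B :: "(nat, nat, nat) automaton"
  assume B: "wf_automaton B \<and> alphabet B = alphabet autA \<and> history_deterministic gen_buchi_acc B \<and>
    lang gen_buchi_acc B = omega_words (alphabet autA) - lang gen_cobuchi_acc autA"
  then obtain \<sigma> where "is_resolver gen_buchi_acc B \<sigma>"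
    unfolding history_deterministic_def by blast
  moreover have "omega_words {0, 1, 2} - (omega_words {0, 1, 2} - alternating_words) = alternating_words"
    by (auto simp: alternating_words_def)
  ultimately interpret hd_alternating_recogniser B \<sigma>
    using B by unfold_locales (simp_all add: lang_autA)
  show "card (states B) > card (states autA)"
    using two_lt_card_states by (simp add: autA_def)
qed

end
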